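(* Let $\alpha=(\alpha_1,\dots,\alpha_n)\in\mathbb{R}^n$ with $\alpha_1,\dots,\alpha_n,1$ linearly independent over $\mathbb{Q}$, and $\ell=n+1$. If $L_\alpha$ is badly approximable, then there is $c>0$ such that there are infinitely many $A\in\mathrm{GL}(\ell,\mathbb{Z})$ with $$\|A(\alpha_1,\dots,\alpha_n,1)^\top\|_\infty<c\,\|A\|_\infty^{-n}.$$
   Context: $L_\alpha(x)=\alpha_1x_1+\cdots+\alpha_nx_n$. For $t\in\mathbb{R}$, $\|t\|$ is the distance to the nearest integer; for a real matrix or vector, $\|\cdot\|_\infty$ is the maximum absolute value of its entries. $L_\alpha$ is badly approximable if there is $c>0$ with $\|L_\alpha(q)\|\ge c\|q\|_\infty^{-n}$ for all nonzero $q\in\mathbb{Z}^n$. *)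

theory Defs
  imports Complex_Main "Jordan_Normal_Form.Determinant"
begin

definition dist_int :: "real \<Rightarrow> real" where
  "dist_int t = \<bar>t - of_int (round t)\<bar>"

(* L_alpha(q) = alpha_1 q_1 + ... + alpha_n q_n, with alpha, q indexed by 0..<n *)
definition lin_form :: "nat \<Rightarrow> (nat \<Rightarrow> real) \<Rightarrow> (nat \<Rightarrow> int) \<Rightarrow> real" where
  "lin_form n \<alpha> q = (\<Sum>i<n. \<alpha> i * of_int (q i))"

definition int_vec_sup_norm :: "nat \<Rightarrow> (nat \<Rightarrow> int) \<Rightarrow> real" where
  "int_vec_sup_norm n q = Max ((\<lambda>i. real_of_int \<bar>q i\<bar>) ` {..<n})"

definition badly_approximable :: "nat \<Rightarrow> (nat \<Rightarrow> real) \<Rightarrow> bool" where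
  "badly_approximable n \<alpha> \<longleftrightarrow>
     (\<exists>c>0. \<forall>q. (\<exists>i<n. q i \<noteq> 0) \<longrightarrow>
        dist_int (lin_form n \<alpha> q) \<ge> c * int_vec_sup_norm n q powr (- real n))"

definition lin_indep_with_one :: "nat \<Rightarrow> (nat \<Rightarrow> real) \<Rightarrow> bool" where
  "lin_indep_with_one n \<alpha> \<longleftrightarrow>
     (\<forall>r :: nat \<Rightarrow> real. \<forall>r0 :: real. (\<forall>i<n. r i \<in> \<rat>) \<longrightarrow> r0 \<in> \<rat> \<longrightarrow>
        (\<Sum>i<n. r i * \<alpha> i) + r0 = 0 \<longrightarrow> (\<forall>i<n. r i = 0) \<and> r0 = 0)"

(* GL(l, Z): integer l x l matrices with integer inverse, i.e. det = +-1 *)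
definition GL_int :: "nat \<Rightarrow> int mat set" where
  "GL_int l = {A. A \<in> carrier_mat l l \<and> (det A = 1 \<or> det A = -1)}"

definition mat_sup_norm :: "int mat \<Rightarrow> real" where
  "mat_sup_norm A = Max ({real_of_int \<bar>A $$ (i,j)\<bar> | i j. i < dim_row A \<and> j < dim_col A} \<union> {0})"

definition ext_vec :: "nat \<Rightarrow> (nat \<Rightarrow> real) \<Rightarrow> real vec" where
  "ext_vec n \<alpha> = vec (n+1) (\<lambda>i. if i < n then \<alpha> i else 1)"

definition real_vec_sup_norm :: "real vec \<Rightarrow> real" where
  "real_vec_sup_norm v = Max ((\<lambda>i. \<bar>v $ i\<bar>) ` {..<dim_vec v} \<union> {0})"

end

theory Submission
  imports Defs
begin

text \<open>For \<open>Q \<ge> 1\<close> consider the quadratic form of determinant 1 on \<open>\<int>\<^sup>n\<^sup>+\<^sup>1\<close>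
  \<open>G\<^sub>Q(q, p) = \<Sum>i<n. (q\<^sub>i / Q)\<^sup>2 + (Q\<^sup>n (L\<^sub>\<alpha>(q) + p))\<^sup>2\<close> (Dani's correspondence).
  Bad approximability of \<open>L\<^sub>\<alpha>\<close> says exactly that the minimum of \<open>G\<^sub>Q\<close> on nonzero integer points
  is bounded below independently of \<open>Q\<close>.  Hermite's reduction theory then yields, uniformly in
  \<open>Q\<close>, a basis of \<open>\<int>\<^sup>n\<^sup>+\<^sup>1\<close> on which \<open>G\<^sub>Q\<close> is bounded.  The transposed basis matrix \<open>A\<close> lies in
  \<open>GL(n+1, \<int>)\<close>, has entries \<open>O(Q)\<close>, and \<open>A (\<alpha>, 1)\<^sup>T\<close> has entries \<open>O(Q\<^sup>-\<^sup>n)\<close>; as \<open>A (\<alpha>, 1)\<^sup>T \<noteq> 0\<close>,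
  letting \<open>Q \<rightarrow> \<infinity>\<close> produces infinitely many such \<open>A\<close>.\<close>

abbreviation real_mat :: "int mat \<Rightarrow> real mat" where
  "real_mat \<equiv> map_mat real_of_int"

abbreviation real_vec :: "int vec \<Rightarrow> real vec" where
  "real_vec \<equiv> map_vec real_of_int"

section \<open>Quadratic forms\<close>

definition quad_form :: "real mat \<Rightarrow> real vec \<Rightarrow> real" where
  "quad_form G x = x \<bullet> (G *\<^sub>v x)"

lemma quad_form_sum:
  assumes "G \<in> carrier_mat d d" and "v \<in> carrier_vec d"
  shows "quad_form G v = (\<Sum>i = 0..<d. \<Sum>j = 0..<d. v$i * G$$(i,j) * v$j)"
  unfolding quad_form_def scalar_prod_def using assms
  by (auto simp: sum_distrib_left mult.assoc scalar_prod_def intro!: sum.cong)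

lemma quad_form_smult:
  assumes "G \<in> carrier_mat d d" and "v \<in> carrier_vec d"
  shows "quad_form G (c \<cdot>\<^sub>v v) = c^2 * quad_form G v"
  using quad_form_sum[OF assms] quad_form_sum[OF assms(1), of "c \<cdot>\<^sub>v v"] assms(2)
  by (simp add: sum_distrib_left power2_eq_square algebra_simps)

lemma quad_form_congruence:
  assumes U: "U \<in> carrier_mat d d" and G: "G \<in> carrier_mat d d" and z: "z \<in> carrier_vec d"
  shows "quad_form (transpose_mat U * G * U) z = quad_form G (U *\<^sub>v z)"
proof -
  have "(transpose_mat U * G * U) *\<^sub>v z = transpose_mat U *\<^sub>v (G *\<^sub>v (U *\<^sub>v z))"
    using U G z by (auto simp: assoc_mult_mat_vec[of _ d d _ d])
  hence "quad_form (transpose_mat U * G * U) z = z \<bullet> (transpose_mat U *\<^sub>v (G *\<^sub>v (U *\<^sub>v z)))"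
    unfolding quad_form_def by simp
  also have "\<dots> = (transpose_mat U *\<^sub>v (G *\<^sub>v (U *\<^sub>v z))) \<bullet> z"
    using U G z by (intro comm_scalar_prod[of _ d]) auto
  also have "\<dots> = (G *\<^sub>v (U *\<^sub>v z)) \<bullet> (U *\<^sub>v z)"
    using U G z by (intro transpose_vec_mult_scalar) auto
  also have "\<dots> = (U *\<^sub>v z) \<bullet> (G *\<^sub>v (U *\<^sub>v z))"
    using U G z by (intro comm_scalar_prod[of _ d]) auto
  finally show ?thesis unfolding quad_form_def .
qed

lemma congruence_diag:
  assumes U: "U \<in> carrier_mat d d" and G: "G \<in> carrier_mat d d" and k: "k < d"
  shows "(transpose_mat U * G * U) $$ (k,k) = quad_form G (col U k)"
proof -
  have "transpose_mat U * G * U = transpose_mat U * (G * U)"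
    using U G by (simp add: assoc_mult_mat)
  also have "\<dots> $$ (k,k) = row (transpose_mat U) k \<bullet> col (G * U) k"
    using U G k by simp
  also have "\<dots> = col U k \<bullet> (G *\<^sub>v col U k)"
    using U G k by (subst col_mult2[OF G U k]) simp
  finally show ?thesis unfolding quad_form_def .
qed

lemma congruence_symmetric:
  fixes U G :: "'a :: comm_ring_1 mat"
  assumes U: "U \<in> carrier_mat d d" and G: "G \<in> carrier_mat d d" and sym: "transpose_mat G = G"
  shows "transpose_mat (transpose_mat U * G * U) = transpose_mat U * G * U"
proof -
  have Ut: "transpose_mat U \<in> carrier_mat d d" using U by simp
  have UG: "transpose_mat U * G \<in> carrier_mat d d" using U G by simp
  have "transpose_mat (transpose_mat U * G * U) = transpose_mat U * transpose_mat (transpose_mat U * G)"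
    by (rule transpose_mult[OF UG U])
  also have "transpose_mat (transpose_mat U * G) = G * U"
    using transpose_mult[OF Ut G] sym by simp
  also have "transpose_mat U * (G * U) = transpose_mat U * G * U"
    using U G by (simp add: assoc_mult_mat[of _ d d _ d _ d])
  finally show ?thesis .
qed

section \<open>Unimodular integer matrices\<close>

lemma GL_int_carrier: "U \<in> GL_int d \<Longrightarrow> U \<in> carrier_mat d d"
  unfolding GL_int_def by simp

lemma GL_int_mult: "U \<in> GL_int d \<Longrightarrow> V \<in> GL_int d \<Longrightarrow> U * V \<in> GL_int d"
  unfolding GL_int_def by (auto simp: det_mult)

lemma GL_int_one: "1\<^sub>m d \<in> GL_int d"
  unfolding GL_int_def by simp

lemma GL_int_transpose: "U \<in> GL_int d \<Longrightarrow> transpose_mat U \<in> GL_int d"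
  unfolding GL_int_def by (auto simp: det_transpose)

lemma GL_int_mult_vec_nonzero:
  assumes "U \<in> GL_int d" "z \<in> carrier_vec d" "z \<noteq> 0\<^sub>v d"
  shows "U *\<^sub>v z \<noteq> 0\<^sub>v d"
proof
  assume "U *\<^sub>v z = 0\<^sub>v d"
  hence "det U = 0" using assms unfolding GL_int_def
    by (subst det_0_iff_vec_prod_zero[of U d]) auto
  thus False using assms unfolding GL_int_def by auto
qed

lemma col_eq_mult_unit_vec:
  fixes A :: "'a :: comm_ring_1 mat"
  assumes A: "A \<in> carrier_mat d d" and k: "k < d"
  shows "col A k = A *\<^sub>v unit_vec d k"
proof (rule eq_vecI)
  fix i assume "i < dim_vec (A *\<^sub>v unit_vec d k)"
  hence i: "i < d" using A by simp
  have "row A i \<in> carrier_vec d" using A by (intro carrier_vecI) simp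
  thus "col A k $ i = (A *\<^sub>v unit_vec d k) $ i" using i k A by (simp add: scalar_prod_right_unit)
qed (use A in simp)

lemma GL_int_col_nonzero:
  assumes U: "U \<in> GL_int d" and k: "k < d"
  shows "col U k \<noteq> 0\<^sub>v d"
proof -
  have "(unit_vec d k :: int vec) \<noteq> 0\<^sub>v d"
    using k by (auto simp: vec_eq_iff)
  thus ?thesis
    using GL_int_mult_vec_nonzero[OF U] col_eq_mult_unit_vec[OF GL_int_carrier[OF U] k] by simp
qed

lemma GL_int_col_carrier: "U \<in> GL_int d \<Longrightarrow> k < d \<Longrightarrow> col U k \<in> carrier_vec d"
  using col_carrier_vec GL_int_carrier by blast

lemma GL_int_left_inverse:
  assumes "T \<in> GL_int d"
  shows "\<exists>V \<in> GL_int d. V * T = 1\<^sub>m d"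
proof -
  have T: "T \<in> carrier_mat d d" and dt: "det T * det T = 1"
    using assms unfolding GL_int_def by auto
  define V where "V = det T \<cdot>\<^sub>m adj_mat T"
  have V: "V \<in> carrier_mat d d" unfolding V_def using adj_mat(1)[OF T] by simp
  have "V * T = det T \<cdot>\<^sub>m (adj_mat T * T)" unfolding V_def
    using adj_mat(1)[OF T] T by (simp add: mult_smult_assoc_mat)
  also have "\<dots> = 1\<^sub>m d" using adj_mat(3)[OF T] dt by (auto intro!: eq_matI)
  finally have VT: "V * T = 1\<^sub>m d" .
  hence "det V * det T = 1" using det_mult[OF V T] by simp
  hence "det V = 1 \<or> det V = -1" using dt
    by (metis mult_cancel_right2 mult_minus_right zmult_eq_1_iff)
  thus ?thesis using V VT unfolding GL_int_def by auto
qed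

lemma addrow_mult_vec_index:
  fixes y :: "'a :: comm_ring_1 vec"
  assumes y: "y \<in> carrier_vec d" and ij: "i < d" "j < d" "i \<noteq> j" and k: "k < d"
  shows "(addrow_mat d s i j *\<^sub>v y) $ k = (if k = i then y$k + s * y$j else y$k)"
proof -
  have delta: "(if a then 1 else 0) * b = (if a then b else 0)" for a and b :: 'a by simp
  have "(addrow_mat d s i j *\<^sub>v y) $ k =
     (\<Sum>l\<in>{0..<d}. (if l = k then y$l else 0) + (if k = i \<and> l = j then s * y$l else 0))"
    using y ij k by (auto simp: scalar_prod_def delta intro!: sum.cong)
  also have "\<dots> = (if k = i then y$k + s * y$j else y$k)"
    using ij k by (simp add: sum.distrib)
  finally show ?thesis .
qed

lemma swaprows_mult_vec_index:
  fixes y :: "'a :: comm_ring_1 vec"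
  assumes y: "y \<in> carrier_vec d" and p: "p < d" and k: "k < d"
  shows "(swaprows_mat d 0 p *\<^sub>v y) $ k = y $ (if k = 0 then p else if k = p then 0 else k)"
proof -
  have delta: "(if a then 1 else 0) * b = (if a then b else 0)" for a and b :: 'a by simp
  have "(swaprows_mat d 0 p *\<^sub>v y) $ k =
     (\<Sum>l\<in>{0..<d}. (if l = (if k = 0 then p else if k = p then 0 else k) then y$l else 0))"
    using y p k by (auto simp: scalar_prod_def delta intro!: sum.cong)
  also have "\<dots> = y $ (if k = 0 then p else if k = p then 0 else k)"
    using p k by (simp add: sum.delta')
  finally show ?thesis .
qed

definition abs_sum :: "int vec \<Rightarrow> nat" where
  "abs_sum y = (\<Sum>i<dim_vec y. nat \<bar>y$i\<bar>)"

text \<open>One step of the Euclidean algorithm on two nonzero coordinates.\<close>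

lemma GL_int_decrease_abs_sum:
  fixes y :: "int vec"
  assumes y: "y \<in> carrier_vec d" and ij: "i < d" "j < d" "i \<noteq> j"
    and nz: "y$i \<noteq> 0" "y$j \<noteq> 0" and le: "\<bar>y$j\<bar> \<le> \<bar>y$i\<bar>"
  shows "\<exists>E\<in>GL_int d. abs_sum (E *\<^sub>v y) < abs_sum y"
proof -
  define E where "E = addrow_mat d (- (sgn (y$i) * sgn (y$j))) i j"
  have E: "E \<in> GL_int d" unfolding E_def GL_int_def using ij by (simp add: det_addrow_mat)
  have Ey: "(E *\<^sub>v y) $ k = (if k = i then y$i - sgn (y$i) * sgn (y$j) * y$j else y$k)"
    if "k < d" for k
    unfolding E_def using addrow_mult_vec_index[OF y ij that] by simp
  have smaller: "\<bar>y$i - sgn (y$i) * sgn (y$j) * y$j\<bar> < \<bar>y$i\<bar>"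
    using nz le by (cases "y$i > 0"; cases "y$j > 0") (auto simp: sgn_if)
  have "abs_sum (E *\<^sub>v y) = (\<Sum>k<d. nat \<bar>(E *\<^sub>v y)$k\<bar>)"
    unfolding abs_sum_def using GL_int_carrier[OF E] by simp
  also have "\<dots> < (\<Sum>k<d. nat \<bar>y$k\<bar>)"
  proof (rule sum_strict_mono_ex1)
    show "\<forall>k\<in>{..<d}. nat \<bar>(E *\<^sub>v y)$k\<bar> \<le> nat \<bar>y$k\<bar>"
      using Ey smaller by auto
    show "\<exists>k\<in>{..<d}. nat \<bar>(E *\<^sub>v y)$k\<bar> < nat \<bar>y$k\<bar>"
      using Ey smaller ij by (intro bexI[of _ i]) auto
  qed simp
  also have "\<dots> = abs_sum y" unfolding abs_sum_def using y by simp
  finally show ?thesis using E by blast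
qed

lemma GL_int_move_single_entry:
  fixes y :: "int vec"
  assumes y: "y \<in> carrier_vec d" and p: "p < d" and others: "\<And>k. k < d \<Longrightarrow> k \<noteq> p \<Longrightarrow> y$k = 0"
  shows "\<exists>P\<in>GL_int d. P *\<^sub>v y = y$p \<cdot>\<^sub>v unit_vec d 0"
proof -
  define P :: "int mat" where "P = (if p = 0 then 1\<^sub>m d else swaprows_mat d 0 p)"
  have "P \<in> GL_int d"
    unfolding P_def GL_int_def using p by (simp add: det_swaprows_mat)
  moreover have "P *\<^sub>v y = y$p \<cdot>\<^sub>v unit_vec d 0"
  proof (rule eq_vecI)
    fix k assume "k < dim_vec (y $ p \<cdot>\<^sub>v unit_vec d 0)"
    hence k: "k < d" by simp
    show "(P *\<^sub>v y) $ k = (y $ p \<cdot>\<^sub>v unit_vec d 0) $ k"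
    proof (cases "p = 0")
      case True
      thus ?thesis using k others y by (auto simp: P_def unit_vec_def)
    next
      case False
      thus ?thesis using swaprows_mult_vec_index[OF y p k] k others y
        by (auto simp: P_def unit_vec_def)
    qed
  qed (simp add: P_def)
  ultimately show ?thesis by blast
qed

text \<open>A matrix minimising the absolute sum of its image of \<open>x\<close> leaves a single nonzero entry.\<close>

lemma GL_int_reduce_to_multiple_of_unit_vec:
  fixes x :: "int vec"
  assumes x: "x \<in> carrier_vec d" and nz: "x \<noteq> 0\<^sub>v d"
  shows "\<exists>T\<in>GL_int d. \<exists>k. T *\<^sub>v x = k \<cdot>\<^sub>v unit_vec d 0"
proof -
  obtain T where T: "T \<in> GL_int d"
    and T_min: "\<And>T'. T' \<in> GL_int d \<Longrightarrow> abs_sum (T *\<^sub>v x) \<le> abs_sum (T' *\<^sub>v x)"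
    using ex_has_least_nat[of "\<lambda>T. T \<in> GL_int d" "1\<^sub>m d" "\<lambda>T. abs_sum (T *\<^sub>v x)"] GL_int_one
    by blast
  define y where "y = T *\<^sub>v x"
  have Tc: "T \<in> carrier_mat d d" using GL_int_carrier[OF T] .
  have y: "y \<in> carrier_vec d" unfolding y_def using Tc x by simp
  have single: "y$i = 0 \<or> y$j = 0" if ij: "i < d" "j < d" "i \<noteq> j" for i j
  proof (rule ccontr)
    assume "\<not> (y$i = 0 \<or> y$j = 0)"
    then obtain E where E: "E \<in> GL_int d" and lt: "abs_sum (E *\<^sub>v y) < abs_sum y"
      using GL_int_decrease_abs_sum[OF y ij] GL_int_decrease_abs_sum[OF y ij(2,1) ij(3)[THEN not_sym]]
      by (cases "\<bar>y$j\<bar> \<le> \<bar>y$i\<bar>") auto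
    have "(E * T) *\<^sub>v x = E *\<^sub>v y"
      unfolding y_def using GL_int_carrier[OF E] Tc x by (simp add: assoc_mult_mat_vec)
    with lt T_min[OF GL_int_mult[OF E T]] show False by (simp add: y_def)
  qed
  obtain p where p: "p < d" "y$p \<noteq> 0"
    using GL_int_mult_vec_nonzero[OF T x nz] y Tc unfolding y_def by (auto simp: vec_eq_iff)
  obtain P where P: "P \<in> GL_int d" and Py: "P *\<^sub>v y = y$p \<cdot>\<^sub>v unit_vec d 0"
    using GL_int_move_single_entry[OF y p(1)] single p by metis
  have "(P * T) *\<^sub>v x = P *\<^sub>v y"
    unfolding y_def using GL_int_carrier[OF P] Tc x by (simp add: assoc_mult_mat_vec)
  thus ?thesis using GL_int_mult[OF P T] Py by metis
qed

lemma nonzero_int_vec_multiple_of_GL_int_col: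
  fixes x :: "int vec"
  assumes x: "x \<in> carrier_vec d" and nz: "x \<noteq> 0\<^sub>v d" and d: "0 < d"
  shows "\<exists>V\<in>GL_int d. \<exists>k. x = k \<cdot>\<^sub>v col V 0"
proof -
  obtain T k where T: "T \<in> GL_int d" and Tx: "T *\<^sub>v x = k \<cdot>\<^sub>v unit_vec d 0"
    using GL_int_reduce_to_multiple_of_unit_vec[OF x nz] by blast
  obtain V where V: "V \<in> GL_int d" and VT: "V * T = 1\<^sub>m d"
    using GL_int_left_inverse[OF T] by blast
  have Vc: "V \<in> carrier_mat d d" and Tc: "T \<in> carrier_mat d d"
    using V T by (simp_all add: GL_int_carrier)
  have "x = (V * T) *\<^sub>v x" using VT x by simp
  also have "\<dots> = V *\<^sub>v (k \<cdot>\<^sub>v unit_vec d 0)" using Vc Tc x Tx by (simp add: assoc_mult_mat_vec)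
  also have "\<dots> = k \<cdot>\<^sub>v col V 0"
    by (rule eq_vecI) (use Vc d in \<open>auto simp: scalar_prod_right_unit\<close>)
  finally show ?thesis using V by blast
qed

section \<open>Completing the square in the first variable\<close>

definition first_row_tail :: "real mat \<Rightarrow> nat \<Rightarrow> real vec" where
  "first_row_tail G d = vec d (\<lambda>j. G$$(0, Suc j))"

definition schur_compl :: "real mat \<Rightarrow> nat \<Rightarrow> real mat" where
  "schur_compl G d =
     mat d d (\<lambda>(i,j). G$$(Suc i, Suc j) - G$$(0, Suc i) * G$$(0, Suc j) / G$$(0,0))"

lemma schur_compl_carrier: "schur_compl G d \<in> carrier_mat d d"
  unfolding schur_compl_def by simp

lemma symmetric_index:
  assumes "G \<in> carrier_mat d d" "transpose_mat G = G" "i < d" "j < d"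
  shows "G$$(i,j) = G$$(j,i)"
  using arg_cong[OF assms(2), of "\<lambda>A. A $$ (j,i)"] assms(1,3,4) by simp

lemma schur_compl_symmetric:
  assumes G: "G \<in> carrier_mat (Suc d) (Suc d)" and sym: "transpose_mat G = G"
  shows "transpose_mat (schur_compl G d) = schur_compl G d"
proof (rule eq_matI)
  fix i j assume "i < dim_row (schur_compl G d)" "j < dim_col (schur_compl G d)"
  hence "i < d" "j < d" by (auto simp: schur_compl_def)
  moreover have "G$$(Suc j, Suc i) = G$$(Suc i, Suc j)"
    using symmetric_index[OF G sym] \<open>i < d\<close> \<open>j < d\<close> by simp
  ultimately show "transpose_mat (schur_compl G d) $$ (i,j) = schur_compl G d $$ (i,j)"
    by (simp add: schur_compl_def)
qed (auto simp: schur_compl_def)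

lemma quad_form_vCons:
  assumes G: "G \<in> carrier_mat (Suc d) (Suc d)" and sym: "transpose_mat G = G"
    and y: "y \<in> carrier_vec d"
  shows "quad_form G (vCons t y) = G$$(0,0) * t^2 + 2 * t * (first_row_tail G d \<bullet> y)
           + (\<Sum>i = 0..<d. \<Sum>j = 0..<d. y$i * G$$(Suc i, Suc j) * y$j)"
proof -
  have "quad_form G (vCons t y) = t * G$$(0,0) * t + (\<Sum>j = 0..<d. t * G$$(0,Suc j) * y$j)
      + ((\<Sum>i = 0..<d. y$i * G$$(Suc i,0) * t)
      + (\<Sum>i = 0..<d. \<Sum>j = 0..<d. y$i * G$$(Suc i,Suc j) * y$j))"
    using quad_form_sum[OF G] y unfolding sum.atLeast0_lessThan_Suc_shift
    by (simp add: sum.distrib o_def del: sum.atLeast0_lessThan_Suc)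
  also have "(\<Sum>i = 0..<d. y$i * G$$(Suc i,0) * t) = (\<Sum>j = 0..<d. t * G$$(0,Suc j) * y$j)"
    using symmetric_index[OF G sym] by (auto intro!: sum.cong)
  also have "(\<Sum>j = 0..<d. t * G$$(0,Suc j) * y$j) = t * (first_row_tail G d \<bullet> y)"
    using y by (simp add: first_row_tail_def scalar_prod_def sum_distrib_left mult.assoc)
  finally show ?thesis by (simp add: power2_eq_square)
qed

lemma quad_form_schur_compl:
  assumes y: "y \<in> carrier_vec d"
  shows "quad_form (schur_compl G d) y = (\<Sum>i = 0..<d. \<Sum>j = 0..<d. y$i * G$$(Suc i, Suc j) * y$j)
           - (first_row_tail G d \<bullet> y)^2 / G$$(0,0)"
proof -
  have "quad_form (schur_compl G d) y = (\<Sum>i = 0..<d. \<Sum>j = 0..<d. y$i * G$$(Suc i, Suc j) * y$j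
           - (y$i * G$$(0,Suc i)) * (y$j * G$$(0,Suc j)) / G$$(0,0))"
    using quad_form_sum[OF schur_compl_carrier y] y by (simp add: schur_compl_def algebra_simps)
  also have "\<dots> = (\<Sum>i = 0..<d. \<Sum>j = 0..<d. y$i * G$$(Suc i, Suc j) * y$j)
      - (\<Sum>i = 0..<d. \<Sum>j = 0..<d. (y$i * G$$(0,Suc i)) * (y$j * G$$(0,Suc j))) / G$$(0,0)"
    by (simp add: sum_subtractf sum_divide_distrib)
  also have "(\<Sum>i = 0..<d. \<Sum>j = 0..<d. (y$i * G$$(0,Suc i)) * (y$j * G$$(0,Suc j)))
       = (first_row_tail G d \<bullet> y)^2"
    using y by (simp add: power2_eq_square sum_product first_row_tail_def scalar_prod_def mult.commute)
  finally show ?thesis .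
qed

lemma quad_form_vCons_complete_square:
  assumes G: "G \<in> carrier_mat (Suc d) (Suc d)" and sym: "transpose_mat G = G"
    and y: "y \<in> carrier_vec d" and a: "G$$(0,0) \<noteq> 0"
  shows "quad_form G (vCons t y) =
           G$$(0,0) * (t + (first_row_tail G d \<bullet> y) / G$$(0,0))^2 + quad_form (schur_compl G d) y"
  unfolding quad_form_vCons[OF G sym y] quad_form_schur_compl[OF y] using a
  by (simp add: power2_eq_square field_simps)

lemma quad_form_vCons_round_le:
  assumes G: "G \<in> carrier_mat (Suc d) (Suc d)" and sym: "transpose_mat G = G"
    and y: "y \<in> carrier_vec d" and a: "0 < G$$(0,0)"
  shows "\<exists>t::int. quad_form G (vCons (of_int t) y) \<le> G$$(0,0) / 4 + quad_form (schur_compl G d) y"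
proof
  define r where "r = - (first_row_tail G d \<bullet> y) / G$$(0,0)"
  have "(of_int (round r) - r)^2 = \<bar>of_int (round r) - r\<bar>^2" by simp
  also have "\<dots> \<le> (1/2)^2" by (rule power_mono[OF of_int_round_abs_le abs_ge_zero])
  finally have "(of_int (round r) - r)^2 \<le> (1/2)^2" .
  hence "G$$(0,0) * (of_int (round r) - r)^2 \<le> G$$(0,0) * (1/2)^2"
    by (rule mult_left_mono) (use a in simp)
  moreover have "of_int (round r) + (first_row_tail G d \<bullet> y) / G$$(0,0) = of_int (round r) - r"
    by (simp add: r_def)
  ultimately show "quad_form G (vCons (of_int (round r)) y) \<le> G$$(0,0) / 4 + quad_form (schur_compl G d) y"
    using quad_form_vCons_complete_square[OF G sym y] a by (simp add: power2_eq_square)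
qed

definition first_col_elim :: "real mat \<Rightarrow> nat \<Rightarrow> real mat" where
  "first_col_elim G d = mat (Suc d) (Suc d)
     (\<lambda>(i,j). if i = j then 1 else if j = 0 then - G$$(i,0) / G$$(0,0) else 0)"

lemma det_first_col_elim: "det (first_col_elim G d) = 1"
proof -
  have "det (first_col_elim G d) = prod_list (diag_mat (first_col_elim G d))"
    by (rule det_lower_triangular[of "Suc d"]) (auto simp: first_col_elim_def)
  also have "diag_mat (first_col_elim G d) = map (\<lambda>_. 1) [0..<Suc d]"
    unfolding diag_mat_def first_col_elim_def by auto
  finally show ?thesis by (simp add: map_replicate_const)
qed

lemma first_col_elim_mult:
  assumes G: "G \<in> carrier_mat (Suc d) (Suc d)" and sym: "transpose_mat G = G"
    and a: "G$$(0,0) \<noteq> 0"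
  shows "first_col_elim G d * G =
           four_block_mat (mat 1 1 (\<lambda>_. G$$(0,0))) (mat 1 d (\<lambda>(_,j). G$$(0, Suc j)))
             (0\<^sub>m d 1) (schur_compl G d)"
    (is "_ = ?N")
proof (rule eq_matI)
  fix i j assume "i < dim_row ?N" "j < dim_col ?N"
  hence i: "i < Suc d" and j: "j < Suc d" by (auto simp: schur_compl_def)
  have "(first_col_elim G d * G) $$ (i,j) = (\<Sum>k = 0..<Suc d. first_col_elim G d $$ (i,k) * G$$(k,j))"
    using i j G by (simp add: scalar_prod_def first_col_elim_def)
  also have "\<dots> = (\<Sum>k = 0..<Suc d. (if k = i then G$$(k,j) else 0)
      + (if k = 0 \<and> i \<noteq> 0 then - G$$(i,0) / G$$(0,0) * G$$(0,j) else 0))"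
    using i by (intro sum.cong refl) (auto simp: first_col_elim_def)
  also have "\<dots> = (if i = 0 then G$$(0,j) else G$$(i,j) - G$$(i,0) * G$$(0,j) / G$$(0,0))"
    using i by (simp add: sum.distrib)
  also have "\<dots> = ?N $$ (i,j)"
    using i j a symmetric_index[OF G sym i, of 0]
    by (cases i; cases j) (auto simp: four_block_mat_def schur_compl_def)
  finally show "(first_col_elim G d * G) $$ (i,j) = ?N $$ (i,j)" .
qed (use G in \<open>auto simp: schur_compl_def first_col_elim_def\<close>)

lemma det_schur_compl:
  assumes G: "G \<in> carrier_mat (Suc d) (Suc d)" and sym: "transpose_mat G = G"
    and a: "G$$(0,0) \<noteq> 0"
  shows "det G = G$$(0,0) * det (schur_compl G d)"
proof -
  have "det G = det (first_col_elim G d * G)"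
    using det_mult[OF _ G, of "first_col_elim G d"] det_first_col_elim
    by (simp add: first_col_elim_def)
  also have "\<dots> = det (mat 1 1 (\<lambda>_. G$$(0,0))) * det (schur_compl G d)"
    unfolding first_col_elim_mult[OF G sym a]
    by (rule det_four_block_mat_lower_left_zero_col) (auto simp: schur_compl_def)
  also have "det (mat 1 1 (\<lambda>_. G$$(0,0))) = G$$(0,0)"
    by (subst det_single) auto
  finally show ?thesis .
qed

section \<open>Bounded bases of positive quadratic forms\<close>

lemma real_vec_vCons: "real_vec (vCons t y) = vCons (real_of_int t) (real_vec y)"
  by (rule eq_vecI) (auto simp: vec_index_vCons)

lemma real_vec_smult: "real_vec (k \<cdot>\<^sub>v w) = real_of_int k \<cdot>\<^sub>v real_vec w"
  by (rule eq_vecI) auto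

lemma real_vec_mult_mat_vec:
  assumes "V \<in> carrier_mat d d" and "z \<in> carrier_vec d"
  shows "real_vec (V *\<^sub>v z) = real_mat V *\<^sub>v real_vec z"
  using of_int_hom.mult_mat_vec_hom[OF assms] by simp

definition lattice_min_ge :: "real mat \<Rightarrow> nat \<Rightarrow> real \<Rightarrow> bool" where
  "lattice_min_ge G d m \<longleftrightarrow>
     (\<forall>x::int vec. x \<in> carrier_vec d \<longrightarrow> x \<noteq> 0\<^sub>v d \<longrightarrow> m \<le> quad_form G (real_vec x))"

definition bounded_basis :: "real mat \<Rightarrow> nat \<Rightarrow> real \<Rightarrow> bool" where
  "bounded_basis G d C \<longleftrightarrow> (\<exists>U\<in>GL_int d. \<forall>k<d. quad_form G (real_vec (col U k)) \<le> C)"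

definition unimodular_congr :: "int mat \<Rightarrow> real mat \<Rightarrow> real mat" where
  "unimodular_congr V G = transpose_mat (real_mat V) * G * real_mat V"

lemma unimodular_congr_carrier:
  "V \<in> GL_int d \<Longrightarrow> G \<in> carrier_mat d d \<Longrightarrow> unimodular_congr V G \<in> carrier_mat d d"
  unfolding unimodular_congr_def by (auto dest: GL_int_carrier)

lemma unimodular_congr_symmetric:
  "V \<in> GL_int d \<Longrightarrow> G \<in> carrier_mat d d \<Longrightarrow> transpose_mat G = G \<Longrightarrow>
   transpose_mat (unimodular_congr V G) = unimodular_congr V G"
  unfolding unimodular_congr_def by (rule congruence_symmetric) (auto dest: GL_int_carrier)

lemma det_unimodular_congr:
  assumes V: "V \<in> GL_int d" and G: "G \<in> carrier_mat d d"
  shows "det (unimodular_congr V G) = det G"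
proof -
  have Vc: "real_mat V \<in> carrier_mat d d" using GL_int_carrier[OF V] by simp
  have "det (real_mat V) * det (real_mat V) = 1"
    using V unfolding GL_int_def by (auto simp: of_int_hom.hom_det)
  moreover have "det (unimodular_congr V G) = det (transpose_mat (real_mat V)) * det G * det (real_mat V)"
    unfolding unimodular_congr_def using Vc G by (simp add: det_mult[of _ d])
  ultimately show ?thesis using det_transpose[OF Vc] by (simp add: algebra_simps)
qed

lemma quad_form_unimodular_congr:
  assumes "V \<in> GL_int d" "G \<in> carrier_mat d d" "z \<in> carrier_vec d"
  shows "quad_form (unimodular_congr V G) (real_vec z) = quad_form G (real_vec (V *\<^sub>v z))"
  using quad_form_congruence[of "real_mat V" d G "real_vec z"] real_vec_mult_mat_vec[of V d z]
    assms GL_int_carrier[OF assms(1)] unfolding unimodular_congr_def by simp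

lemma unimodular_congr_first_diag:
  assumes "V \<in> GL_int d" "G \<in> carrier_mat d d" "0 < d"
  shows "unimodular_congr V G $$ (0,0) = quad_form G (real_vec (col V 0))"
  using congruence_diag[of "real_mat V" d G 0] assms GL_int_carrier[OF assms(1)]
  unfolding unimodular_congr_def by simp

lemma lattice_min_ge_unimodular_congr:
  assumes V: "V \<in> GL_int d" and G: "G \<in> carrier_mat d d" and min: "lattice_min_ge G d m"
  shows "lattice_min_ge (unimodular_congr V G) d m"
  unfolding lattice_min_ge_def
proof (intro allI impI)
  fix z :: "int vec" assume z: "z \<in> carrier_vec d" "z \<noteq> 0\<^sub>v d"
  hence "V *\<^sub>v z \<in> carrier_vec d" "V *\<^sub>v z \<noteq> 0\<^sub>v d"
    using GL_int_mult_vec_nonzero[OF V] GL_int_carrier[OF V] by auto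
  thus "m \<le> quad_form (unimodular_congr V G) (real_vec z)"
    using min quad_form_unimodular_congr[OF V G z(1)] unfolding lattice_min_ge_def by simp
qed

lemma bounded_basis_of_unimodular_congr:
  assumes V: "V \<in> GL_int d" and G: "G \<in> carrier_mat d d"
    and "bounded_basis (unimodular_congr V G) d C"
  shows "bounded_basis G d C"
proof -
  obtain U where U: "U \<in> GL_int d"
    and bound: "\<And>k. k < d \<Longrightarrow> quad_form (unimodular_congr V G) (real_vec (col U k)) \<le> C"
    using assms(3) unfolding bounded_basis_def by blast
  have "quad_form G (real_vec (col (V * U) k)) \<le> C" if "k < d" for k
    using bound[OF that] quad_form_unimodular_congr[OF V G, of "col U k"] that
      col_mult2[of V d d U d k] GL_int_carrier[OF V] GL_int_carrier[OF U] by simp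
  thus ?thesis using GL_int_mult[OF V U] unfolding bounded_basis_def by blast
qed

text \<open>The factor 2 spares us from showing that the lattice minimum is attained.\<close>

lemma exists_nearly_minimal_GL_int_col:
  assumes G: "G \<in> carrier_mat d d" and min: "lattice_min_ge G d m" and m: "0 < m" and d: "0 < d"
  shows "\<exists>V\<in>GL_int d. \<forall>z. z \<in> carrier_vec d \<longrightarrow> z \<noteq> 0\<^sub>v d \<longrightarrow>
           quad_form G (real_vec (col V 0)) \<le> 2 * quad_form G (real_vec z)"
proof -
  define S where "S = {quad_form G (real_vec x) | x. x \<in> carrier_vec d \<and> x \<noteq> 0\<^sub>v d}"
  have S_ne: "S \<noteq> {}"
    unfolding S_def using d by (auto intro!: exI[of _ "unit_vec d 0"] simp: vec_eq_iff)
  have S_ge: "m \<le> v" if "v \<in> S" for v using min that unfolding S_def lattice_min_ge_def by auto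
  have Inf_le: "Inf S \<le> quad_form G (real_vec z)" if "z \<in> carrier_vec d" "z \<noteq> 0\<^sub>v d" for z
    using that S_ge by (intro cInf_lower) (auto simp: S_def bdd_below_def)
  have "Inf S < 2 * Inf S" using cInf_greatest[OF S_ne S_ge] m by linarith
  then obtain x where x: "x \<in> carrier_vec d" "x \<noteq> 0\<^sub>v d" and x_lt: "quad_form G (real_vec x) < 2 * Inf S"
    using cInf_lessD[OF S_ne] unfolding S_def by blast
  obtain V k where V: "V \<in> GL_int d" and xk: "x = k \<cdot>\<^sub>v col V 0"
    using nonzero_int_vec_multiple_of_GL_int_col[OF x d] by blast
  have col: "col V 0 \<in> carrier_vec d" using GL_int_col_carrier[OF V d] .
  have "k \<noteq> 0"
  proof
    assume "k = 0"
    hence "x = 0\<^sub>v d" using xk GL_int_carrier[OF V] by (auto intro!: eq_vecI)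
    with x show False by simp
  qed
  hence "1 \<le> (real_of_int k)^2"
    by (smt (verit) of_int_1 of_int_power_le_of_int_cancel_iff zero_less_power2)
  moreover have "0 \<le> quad_form G (real_vec (col V 0))"
    using min m GL_int_col_nonzero[OF V d] col unfolding lattice_min_ge_def by force
  ultimately have "quad_form G (real_vec (col V 0)) \<le> quad_form G (real_vec x)"
    using quad_form_smult[OF G, of "real_vec (col V 0)" "real_of_int k"] col
    by (simp add: xk real_vec_smult mult_le_cancel_right1)
  thus ?thesis using V x_lt Inf_le by force
qed

lemma lattice_min_ge_schur_compl:
  assumes G: "G \<in> carrier_mat (Suc d) (Suc d)" and sym: "transpose_mat G = G"
    and a: "0 < G$$(0,0)" and min: "lattice_min_ge G (Suc d) m"
    and near: "\<forall>z. z \<in> carrier_vec (Suc d) \<longrightarrow> z \<noteq> 0\<^sub>v (Suc d) \<longrightarrow>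
                 G$$(0,0) \<le> 2 * quad_form G (real_vec z)"
  shows "lattice_min_ge (schur_compl G d) d (m/2)"
  unfolding lattice_min_ge_def
proof (intro allI impI)
  fix y :: "int vec" assume y: "y \<in> carrier_vec d" "y \<noteq> 0\<^sub>v d"
  obtain t where t: "quad_form G (vCons (of_int t) (real_vec y))
                      \<le> G$$(0,0) / 4 + quad_form (schur_compl G d) (real_vec y)"
    using quad_form_vCons_round_le[OF G sym _ a, of "real_vec y"] y by auto
  have z: "vCons t y \<in> carrier_vec (Suc d)" "vCons t y \<noteq> 0\<^sub>v (Suc d)"
    using y by (auto simp: vec_eq_iff vec_index_vCons)
  have "m \<le> quad_form G (real_vec (vCons t y))" "G$$(0,0) \<le> 2 * quad_form G (real_vec (vCons t y))"
    using min near z unfolding lattice_min_ge_def by auto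
  thus "m / 2 \<le> quad_form (schur_compl G d) (real_vec y)"
    using t unfolding real_vec_vCons by linarith
qed

lemma GL_int_extend:
  assumes V: "V \<in> GL_int d"
  shows "\<exists>W\<in>GL_int (Suc d). col W 0 = vCons 1 (0\<^sub>v d) \<and>
           (\<forall>j<d. col W (Suc j) = vCons (w j) (col V j))"
proof -
  have Vc: "V \<in> carrier_mat d d" using GL_int_carrier[OF V] .
  define W :: "int mat" where "W = four_block_mat (1\<^sub>m 1) (mat 1 d (\<lambda>(_,j). w j)) (0\<^sub>m d 1) V"
  have Wc: "W \<in> carrier_mat (Suc d) (Suc d)" unfolding W_def using Vc by auto
  have "det W = det (1\<^sub>m 1 :: int mat) * det V"
    unfolding W_def by (rule det_four_block_mat_lower_left_zero_col) (use Vc in auto)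
  hence "W \<in> GL_int (Suc d)" using V Wc unfolding GL_int_def by simp
  moreover have "col W 0 = vCons 1 (0\<^sub>v d)"
    by (rule eq_vecI) (use Wc Vc in \<open>auto simp: W_def four_block_mat_def vec_index_vCons\<close>)
  moreover have "col W (Suc j) = vCons (w j) (col V j)" if "j < d" for j
    by (rule eq_vecI) (use that Wc Vc in \<open>auto simp: W_def four_block_mat_def vec_index_vCons\<close>)
  ultimately show ?thesis by blast
qed

text \<open>Each basis vector of the Schur complement gets a rounded first coordinate; near-minimality
  of the corner entry bounds it by the value at the second new basis vector.\<close>

lemma bounded_basis_from_schur_compl:
  assumes G: "G \<in> carrier_mat (Suc d) (Suc d)" and sym: "transpose_mat G = G"
    and a: "0 < G$$(0,0)" and d: "0 < d"
    and near: "\<forall>z. z \<in> carrier_vec (Suc d) \<longrightarrow> z \<noteq> 0\<^sub>v (Suc d) \<longrightarrow>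
                 G$$(0,0) \<le> 2 * quad_form G (real_vec z)"
    and "bounded_basis (schur_compl G d) d C"
  shows "bounded_basis G (Suc d) (4 * C)"
proof -
  obtain V where V: "V \<in> GL_int d"
    and V_bound: "\<And>j. j < d \<Longrightarrow> quad_form (schur_compl G d) (real_vec (col V j)) \<le> C"
    using assms(6) unfolding bounded_basis_def by blast
  have Vc: "V \<in> carrier_mat d d" using GL_int_carrier[OF V] .
  have "\<exists>t::int. quad_form G (vCons (of_int t) (real_vec (col V j)))
           \<le> G$$(0,0) / 4 + quad_form (schur_compl G d) (real_vec (col V j))" if "j < d" for j
    using quad_form_vCons_round_le[OF G sym _ a] GL_int_col_carrier[OF V that] by simp
  hence "\<forall>j\<in>{..<d}. \<exists>t::int. quad_form G (vCons (of_int t) (real_vec (col V j)))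
           \<le> G$$(0,0) / 4 + quad_form (schur_compl G d) (real_vec (col V j))"
    by blast
  then obtain w where w: "\<forall>j\<in>{..<d}. quad_form G (vCons (of_int (w j)) (real_vec (col V j)))
                      \<le> G$$(0,0) / 4 + quad_form (schur_compl G d) (real_vec (col V j))"
    by (rule bchoice[THEN exE])
  obtain W where W: "W \<in> GL_int (Suc d)" and W0: "col W 0 = vCons 1 (0\<^sub>v d)"
    and WS: "\<And>j. j < d \<Longrightarrow> col W (Suc j) = vCons (w j) (col V j)"
    using GL_int_extend[OF V, of w] by blast
  have "real_vec (col W 0) = vCons 1 (0\<^sub>v d)"
    by (rule eq_vecI) (auto simp: W0 vec_index_vCons split: nat.split)
  hence col0: "quad_form G (real_vec (col W 0)) = G$$(0,0)"
    using quad_form_vCons[OF G sym zero_carrier_vec, of 1] by (simp add: scalar_prod_def)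
  have colS: "quad_form G (real_vec (col W (Suc j))) \<le> G$$(0,0) / 4 + C" if "j < d" for j
    using bspec[OF w, of j] V_bound[OF that] that unfolding WS[OF that] real_vec_vCons by simp
  have "G$$(0,0) \<le> 2 * quad_form G (real_vec (col W 1))"
    using near GL_int_col_nonzero[OF W, of 1] GL_int_col_carrier[OF W, of 1] d by simp
  hence "G$$(0,0) \<le> 4 * C" using colS[OF d] by simp
  hence "quad_form G (real_vec (col W k)) \<le> 4 * C" if "k < Suc d" for k
  proof (cases k)
    case (Suc j)
    hence "j < d" using that by simp
    with colS show ?thesis using a \<open>G$$(0,0) \<le> 4 * C\<close> Suc by fastforce
  qed (use col0 in simp)
  hence "\<forall>k<Suc d. quad_form G (real_vec (col W k)) \<le> 4 * C" by blast
  thus ?thesis using W unfolding bounded_basis_def by blast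
qed

lemma exists_unimodular_congr_nearly_minimal_corner:
  assumes G: "G \<in> carrier_mat d d" and min: "lattice_min_ge G d m" and m: "0 < m" and d: "0 < d"
  shows "\<exists>V\<in>GL_int d. m \<le> unimodular_congr V G $$ (0,0) \<and>
           (\<forall>z. z \<in> carrier_vec d \<longrightarrow> z \<noteq> 0\<^sub>v d \<longrightarrow>
              unimodular_congr V G $$ (0,0) \<le> 2 * quad_form (unimodular_congr V G) (real_vec z))"
proof -
  obtain V where V: "V \<in> GL_int d" and near: "\<forall>z. z \<in> carrier_vec d \<longrightarrow>
      z \<noteq> 0\<^sub>v d \<longrightarrow> quad_form G (real_vec (col V 0)) \<le> 2 * quad_form G (real_vec z)"
    using exists_nearly_minimal_GL_int_col[OF G min m d] by blast
  have a: "unimodular_congr V G $$ (0,0) = quad_form G (real_vec (col V 0))"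
    using unimodular_congr_first_diag[OF V G d] .
  have "col V 0 \<in> carrier_vec d" "col V 0 \<noteq> 0\<^sub>v d"
    using GL_int_col_nonzero[OF V d] GL_int_col_carrier[OF V d] by auto
  hence "m \<le> unimodular_congr V G $$ (0,0)" using min unfolding a lattice_min_ge_def by blast
  moreover have "unimodular_congr V G $$ (0,0) \<le> 2 * quad_form (unimodular_congr V G) (real_vec z)"
    if z: "z \<in> carrier_vec d" "z \<noteq> 0\<^sub>v d" for z
  proof -
    have "V *\<^sub>v z \<in> carrier_vec d" "V *\<^sub>v z \<noteq> 0\<^sub>v d"
      using GL_int_mult_vec_nonzero[OF V z] GL_int_carrier[OF V] z by auto
    thus ?thesis using near unfolding a quad_form_unimodular_congr[OF V G z(1)] by blast
  qed
  ultimately show ?thesis using V by blast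
qed

lemma bounded_basis_step:
  assumes G: "G \<in> carrier_mat (Suc d) (Suc d)" and sym: "transpose_mat G = G"
    and det: "det G \<le> D" and min: "lattice_min_ge G (Suc d) m" and m: "0 < m" and d: "0 < d"
    and IH: "\<And>H. H \<in> carrier_mat d d \<Longrightarrow> transpose_mat H = H \<Longrightarrow> det H \<le> max D 0 / m
      \<Longrightarrow> lattice_min_ge H d (m/2) \<Longrightarrow> bounded_basis H d C"
  shows "bounded_basis G (Suc d) (4 * C)"
proof -
  obtain V where V: "V \<in> GL_int (Suc d)" and a: "m \<le> unimodular_congr V G $$ (0,0)"
    and near: "\<forall>z. z \<in> carrier_vec (Suc d) \<longrightarrow> z \<noteq> 0\<^sub>v (Suc d) \<longrightarrow>
      unimodular_congr V G $$ (0,0) \<le> 2 * quad_form (unimodular_congr V G) (real_vec z)"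
    using exists_unimodular_congr_nearly_minimal_corner[OF G min m] by blast
  define G' where "G' = unimodular_congr V G"
  have G': "G' \<in> carrier_mat (Suc d) (Suc d)" "transpose_mat G' = G'" "det G' = det G"
    "lattice_min_ge G' (Suc d) m"
    unfolding G'_def using V G sym min
    by (simp_all add: unimodular_congr_carrier unimodular_congr_symmetric det_unimodular_congr
        lattice_min_ge_unimodular_congr)
  have a_pos: "0 < G'$$(0,0)" using a m unfolding G'_def by simp
  have "det (schur_compl G' d) = det G / G'$$(0,0)"
    using det_schur_compl[OF G'(1,2)] G'(3) a_pos by simp
  also have "\<dots> \<le> max D 0 / m"
    using det a m unfolding G'_def by (intro frac_le) auto
  finally have "bounded_basis (schur_compl G' d) d C"
    using IH schur_compl_carrier schur_compl_symmetric[OF G'(1,2)]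
      lattice_min_ge_schur_compl[OF G'(1,2) a_pos G'(4)] near unfolding G'_def by simp
  hence "bounded_basis G' (Suc d) (4 * C)"
    using bounded_basis_from_schur_compl[OF G'(1,2) a_pos d] near unfolding G'_def by simp
  thus ?thesis using bounded_basis_of_unimodular_congr[OF V G] unfolding G'_def by blast
qed

lemma bounded_basis_exists:
  assumes "0 < d" and "0 < m"
  shows "\<exists>C. \<forall>G. G \<in> carrier_mat d d \<longrightarrow> transpose_mat G = G \<longrightarrow> det G \<le> D \<longrightarrow>
           lattice_min_ge G d m \<longrightarrow> bounded_basis G d C"
  using assms
proof (induction d arbitrary: m D rule: nat_induct_non_zero)
  case 1
  have "bounded_basis G 1 D" if G: "G \<in> carrier_mat 1 1" and "det G \<le> D" for G
  proof -
    have "real_vec (col (1\<^sub>m 1) 0) = unit_vec 1 0" by (rule eq_vecI) auto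
    hence "quad_form G (real_vec (col (1\<^sub>m 1) 0)) = det G"
      using col_eq_mult_unit_vec[OF G, of 0] G det_single[OF G] by (simp add: quad_form_def)
    thus ?thesis using GL_int_one[of 1] \<open>det G \<le> D\<close> unfolding bounded_basis_def by force
  qed
  thus ?case by blast
next
  case (Suc d)
  obtain C where "\<And>H. H \<in> carrier_mat d d \<Longrightarrow> transpose_mat H = H \<Longrightarrow> det H \<le> max D 0 / m
      \<Longrightarrow> lattice_min_ge H d (m/2) \<Longrightarrow> bounded_basis H d C"
    using Suc.IH[of "m/2" "max D 0 / m"] Suc.prems by auto
  thus ?case using bounded_basis_step[OF _ _ _ _ Suc.prems Suc.hyps] by blast
qed

section \<open>The quadratic forms attached to \<open>\<alpha>\<close>\<close>

definition approx_basis :: "nat \<Rightarrow> (nat \<Rightarrow> real) \<Rightarrow> real \<Rightarrow> real mat" where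
  "approx_basis n \<alpha> Q = mat (Suc n) (Suc n) (\<lambda>(i,j).
     if i < n then (if i = j then 1 / Q else 0) else (if j < n then Q^n * \<alpha> j else Q^n))"

definition approx_form :: "nat \<Rightarrow> (nat \<Rightarrow> real) \<Rightarrow> real \<Rightarrow> real mat" where
  "approx_form n \<alpha> Q = transpose_mat (approx_basis n \<alpha> Q) * approx_basis n \<alpha> Q"

lemma approx_basis_carrier: "approx_basis n \<alpha> Q \<in> carrier_mat (Suc n) (Suc n)"
  unfolding approx_basis_def by simp

lemma approx_form_congruence:
  "approx_form n \<alpha> Q = transpose_mat (approx_basis n \<alpha> Q) * 1\<^sub>m (Suc n) * approx_basis n \<alpha> Q"
proof -
  have "transpose_mat (approx_basis n \<alpha> Q) \<in> carrier_mat (Suc n) (Suc n)"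
    using approx_basis_carrier by simp
  from right_mult_one_mat[OF this] show ?thesis unfolding approx_form_def by simp
qed

lemma approx_form_carrier: "approx_form n \<alpha> Q \<in> carrier_mat (Suc n) (Suc n)"
  unfolding approx_form_def using approx_basis_carrier by (metis mult_carrier_mat transpose_carrier_mat)

lemma approx_form_symmetric: "transpose_mat (approx_form n \<alpha> Q) = approx_form n \<alpha> Q"
  unfolding approx_form_congruence
  by (rule congruence_symmetric[OF approx_basis_carrier one_carrier_mat]) simp

lemma approx_basis_mult_vec_index:
  assumes v: "v \<in> carrier_vec (Suc n)" and i: "i < Suc n"
  shows "(approx_basis n \<alpha> Q *\<^sub>v v) $ i =
           (if i < n then v$i / Q else Q^n * ((\<Sum>j<n. \<alpha> j * v$j) + v$n))"
proof -
  have "(approx_basis n \<alpha> Q *\<^sub>v v) $ i = (\<Sum>j = 0..<Suc n. approx_basis n \<alpha> Q $$ (i,j) * v$j)"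
    using v i approx_basis_carrier[of n \<alpha> Q] by (simp add: scalar_prod_def)
  also have "\<dots> = (if i < n then v$i / Q else Q^n * ((\<Sum>j<n. \<alpha> j * v$j) + v$n))"
  proof (cases "i < n")
    case True
    have "(\<Sum>j = 0..<Suc n. approx_basis n \<alpha> Q $$ (i,j) * v$j) = (\<Sum>j = 0..<Suc n. if j = i then v$j / Q else 0)"
      using True by (intro sum.cong) (auto simp: approx_basis_def)
    thus ?thesis using True i by (simp add: sum.delta)
  next
    case False
    hence "(\<Sum>j = 0..<Suc n. approx_basis n \<alpha> Q $$ (i,j) * v$j) = (\<Sum>j<n. Q^n * \<alpha> j * v$j) + Q^n * v$n"
      using i by (simp add: sum.atLeast0_lessThan_Suc approx_basis_def atLeast0LessThan)
    thus ?thesis using False by (simp add: sum_distrib_left algebra_simps)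
  qed
  finally show ?thesis .
qed

lemma quad_form_approx_form:
  assumes v: "v \<in> carrier_vec (Suc n)"
  shows "quad_form (approx_form n \<alpha> Q) (real_vec v) = (\<Sum>i<n. (of_int (v$i) / Q)^2)
           + (Q^n * (lin_form n \<alpha> (\<lambda>i. v$i) + of_int (v$n)))^2"
proof -
  let ?B = "approx_basis n \<alpha> Q" and ?w = "real_vec v"
  have w: "?w \<in> carrier_vec (Suc n)" using v by simp
  have "quad_form (approx_form n \<alpha> Q) ?w = quad_form (1\<^sub>m (Suc n)) (?B *\<^sub>v ?w)"
    unfolding approx_form_congruence by (rule quad_form_congruence[OF approx_basis_carrier one_carrier_mat w])
  also have "\<dots> = (\<Sum>i = 0..<Suc n. ((?B *\<^sub>v ?w) $ i)^2)"
    using approx_basis_carrier[of n \<alpha> Q] w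
    by (simp add: quad_form_def scalar_prod_def power2_eq_square)
  also have "\<dots> = (\<Sum>i = 0..<Suc n. (if i < n then ?w$i / Q else Q^n * ((\<Sum>j<n. \<alpha> j * ?w$j) + ?w$n))^2)"
    using approx_basis_mult_vec_index[OF w] by (intro sum.cong) auto
  also have "\<dots> = (\<Sum>i<n. (of_int (v$i) / Q)^2) + (Q^n * (lin_form n \<alpha> (\<lambda>i. v$i) + of_int (v$n)))^2"
    using v by (simp add: sum.atLeast0_lessThan_Suc atLeast0LessThan lin_form_def)
  finally show ?thesis .
qed

lemma det_approx_form:
  assumes "0 < Q"
  shows "det (approx_form n \<alpha> Q) = 1"
proof -
  have "det (approx_basis n \<alpha> Q) = prod_list (diag_mat (approx_basis n \<alpha> Q))"
    by (rule det_lower_triangular[of "Suc n"]) (auto simp: approx_basis_def)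
  also have "diag_mat (approx_basis n \<alpha> Q) = map (\<lambda>_. 1 / Q) [0..<n] @ [Q^n]"
    unfolding diag_mat_def approx_basis_def by auto
  finally have "det (approx_basis n \<alpha> Q) = 1"
    using assms by (simp add: map_replicate_const power_one_over)
  thus ?thesis
    unfolding approx_form_def using approx_basis_carrier[of n \<alpha> Q]
    by (simp add: det_mult[of _ "Suc n"] det_transpose)
qed

lemma int_vec_sup_norm_ge: "i < n \<Longrightarrow> \<bar>real_of_int (q i)\<bar> \<le> int_vec_sup_norm n q"
  unfolding int_vec_sup_norm_def by (intro Max_ge) auto

lemma int_vec_sup_norm_attained:
  assumes "0 < n"
  shows "\<exists>i<n. int_vec_sup_norm n q = \<bar>real_of_int (q i)\<bar>"
proof -
  have "int_vec_sup_norm n q \<in> (\<lambda>i. real_of_int \<bar>q i\<bar>) ` {..<n}"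
    unfolding int_vec_sup_norm_def by (rule Max_in) (use assms in auto)
  thus ?thesis by auto
qed

lemma badly_approximable_value_lower_bound:
  fixes q :: "nat \<Rightarrow> int" and p :: int
  assumes Q: "1 \<le> Q" and c: "0 < c"
    and BA: "\<forall>q. (\<exists>i<n. q i \<noteq> 0) \<longrightarrow>
               dist_int (lin_form n \<alpha> q) \<ge> c * int_vec_sup_norm n q powr (- real n)"
    and nonzero: "(\<exists>i<n. q i \<noteq> 0) \<or> p \<noteq> 0"
  shows "min 1 (c^2) \<le> (\<Sum>i<n. (of_int (q i) / Q)^2) + (Q^n * (lin_form n \<alpha> q + of_int p))^2"
proof -
  define S where "S = (\<Sum>i<n. (of_int (q i) / Q)^2)"
  define l where "l = lin_form n \<alpha> q + of_int p"
  have S: "0 \<le> S" unfolding S_def by (intro sum_nonneg) auto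
  have Qn: "1 \<le> Q^n" using Q by (simp add: one_le_power)
  consider "\<forall>i<n. q i = 0" | N where "\<exists>i<n. q i \<noteq> 0" "N = int_vec_sup_norm n q" "N < Q"
    | "\<exists>i<n. q i \<noteq> 0" "Q \<le> int_vec_sup_norm n q"
    by fastforce
  thus ?thesis
  proof cases
    case 1
    hence "p \<noteq> 0" using nonzero by blast
    hence "1 \<le> \<bar>p\<bar>" by linarith
    hence "1 \<le> \<bar>l\<bar>" using 1 by (simp add: l_def lin_form_def flip: of_int_abs)
    hence "1 * 1 \<le> Q^n * \<bar>l\<bar>" using Qn by (intro mult_mono) auto
    hence "1 \<le> \<bar>Q^n * l\<bar>" using Qn by (simp add: abs_mult)
    hence "1 \<le> (Q^n * l)^2" using one_le_power[of "\<bar>Q^n * l\<bar>" 2] by simp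
    thus ?thesis using S unfolding S_def l_def by linarith
  next
    case (2 N)
    then obtain i where i: "i < n" "q i \<noteq> 0" by blast
    have N1: "1 \<le> N" using int_vec_sup_norm_ge[OF i(1), of q] i(2) 2 by linarith
    have "c / N^n = c * N powr (- real n)"
      using N1 by (simp add: powr_minus powr_realpow divide_inverse)
    also have "\<dots> \<le> dist_int (lin_form n \<alpha> q)" using BA 2 by blast
    also have "\<dots> \<le> \<bar>l\<bar>"
      unfolding dist_int_def l_def using round_diff_minimal[of _ "- p"] by simp
    finally have "c \<le> N^n * \<bar>l\<bar>" using N1 by (simp add: divide_le_eq mult.commute)
    also have "\<dots> \<le> \<bar>Q^n * l\<bar>"
      using 2 N1 by (auto simp: abs_mult intro!: mult_right_mono power_mono)
    finally have "c^2 \<le> \<bar>Q^n * l\<bar>^2" using c by (intro power_mono) auto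
    thus ?thesis using S unfolding S_def l_def by simp
  next
    case 3
    obtain i where i: "i < n" "int_vec_sup_norm n q = \<bar>real_of_int (q i)\<bar>"
      using int_vec_sup_norm_attained 3 by (metis gr_zeroI less_zeroE)
    have "1 \<le> \<bar>of_int (q i) / Q\<bar>" using 3 i Q by simp
    hence "1 \<le> \<bar>of_int (q i) / Q\<bar>^2" by (rule one_le_power)
    hence "1 \<le> (of_int (q i) / Q)^2" by (simp only: power2_abs)
    also have "\<dots> \<le> S" unfolding S_def using i(1) by (intro member_le_sum) auto
    finally show ?thesis unfolding S_def by (smt (verit) zero_le_power2)
  qed
qed

lemma lattice_min_ge_approx_form:
  assumes "1 \<le> Q" and "0 < c"
    and "\<forall>q. (\<exists>i<n. q i \<noteq> 0) \<longrightarrow>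
               dist_int (lin_form n \<alpha> q) \<ge> c * int_vec_sup_norm n q powr (- real n)"
  shows "lattice_min_ge (approx_form n \<alpha> Q) (Suc n) (min 1 (c^2))"
  unfolding lattice_min_ge_def
proof (intro allI impI)
  fix v :: "int vec" assume v: "v \<in> carrier_vec (Suc n)" "v \<noteq> 0\<^sub>v (Suc n)"
  have "(\<exists>i<n. v$i \<noteq> 0) \<or> v$n \<noteq> 0"
    using v by (auto simp: vec_eq_iff less_Suc_eq)
  thus "min 1 (c^2) \<le> quad_form (approx_form n \<alpha> Q) (real_vec v)"
    unfolding quad_form_approx_form[OF v(1)]
    by (rule badly_approximable_value_lower_bound[OF assms])
qed

lemma approx_value_bounds:
  fixes q :: "nat \<Rightarrow> int" and p :: int
  assumes Q: "1 \<le> Q"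
    and le: "(\<Sum>i<n. (of_int (q i) / Q)^2) + (Q^n * (lin_form n \<alpha> q + of_int p))^2 \<le> C"
  shows "\<bar>lin_form n \<alpha> q + of_int p\<bar> \<le> sqrt C / Q^n"
    and "\<And>i. i < n \<Longrightarrow> \<bar>real_of_int (q i)\<bar> \<le> sqrt C * Q"
    and "\<bar>real_of_int p\<bar> \<le> sqrt C * (1 + (\<Sum>j<n. \<bar>\<alpha> j\<bar>)) * Q"
proof -
  have Qn: "1 \<le> Q^n" using Q by (simp add: one_le_power)
  have S: "0 \<le> (\<Sum>i<n. (of_int (q i) / Q)^2)" by (intro sum_nonneg) auto
  have sq: "0 \<le> (Q^n * (lin_form n \<alpha> q + of_int p))^2" by simp
  have "\<bar>Q^n * (lin_form n \<alpha> q + of_int p)\<bar> \<le> sqrt C"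
    using S le by (intro real_le_rsqrt) simp
  thus l: "\<bar>lin_form n \<alpha> q + of_int p\<bar> \<le> sqrt C / Q^n"
    using Qn by (simp add: abs_mult le_divide_eq mult.commute)
  have q: "\<bar>real_of_int (q i)\<bar> \<le> sqrt C * Q" if i: "i < n" for i
  proof -
    have "(of_int (q i) / Q)^2 \<le> (\<Sum>i<n. (of_int (q i) / Q)^2)"
      by (rule member_le_sum) (use i in auto)
    hence "\<bar>of_int (q i) / Q\<bar>^2 \<le> C" unfolding power2_abs using le sq by linarith
    hence "\<bar>of_int (q i) / Q\<bar> \<le> sqrt C" by (rule real_le_rsqrt)
    thus ?thesis using Q by (simp add: divide_le_eq)
  qed
  thus "\<And>i. i < n \<Longrightarrow> \<bar>real_of_int (q i)\<bar> \<le> sqrt C * Q" .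
  have "0 \<le> C" using le S sq by linarith
  hence C: "0 \<le> sqrt C" by simp
  have "\<bar>lin_form n \<alpha> q\<bar> \<le> (\<Sum>j<n. \<bar>\<alpha> j * of_int (q j)\<bar>)"
    unfolding lin_form_def by (rule sum_abs)
  also have "\<dots> \<le> (\<Sum>j<n. \<bar>\<alpha> j\<bar> * (sqrt C * Q))"
    by (rule sum_mono) (simp add: abs_mult mult_left_mono q)
  finally have L: "\<bar>lin_form n \<alpha> q\<bar> \<le> (\<Sum>j<n. \<bar>\<alpha> j\<bar>) * (sqrt C * Q)"
    by (simp add: sum_distrib_right)
  have "sqrt C / Q^n \<le> sqrt C" using C Qn by (simp add: divide_le_eq mult_left_mono[of 1 "Q^n" "sqrt C", simplified])
  also have "\<dots> \<le> sqrt C * Q" using C Q mult_left_mono[of 1 Q "sqrt C"] by simp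
  finally have "\<bar>lin_form n \<alpha> q + of_int p\<bar> \<le> sqrt C * Q" using l by linarith
  thus "\<bar>real_of_int p\<bar> \<le> sqrt C * (1 + (\<Sum>j<n. \<bar>\<alpha> j\<bar>)) * Q"
    using L by (simp add: algebra_simps)
qed

lemma real_vec_sup_norm_le:
  assumes "0 \<le> b" and "\<And>i. i < dim_vec v \<Longrightarrow> \<bar>v$i\<bar> \<le> b"
  shows "real_vec_sup_norm v \<le> b"
  unfolding real_vec_sup_norm_def using assms by (subst Max_le_iff) auto

lemma abs_le_real_vec_sup_norm: "i < dim_vec v \<Longrightarrow> \<bar>v$i\<bar> \<le> real_vec_sup_norm v"
  unfolding real_vec_sup_norm_def by (intro Max_ge) auto

lemma finite_mat_entries:
  "finite ({real_of_int \<bar>A $$ (i,j)\<bar> | i j. i < dim_row A \<and> j < dim_col A} \<union> {0})"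
  using finite_image_set2[of "\<lambda>i. i < dim_row A" "\<lambda>j. j < dim_col A"] by simp

lemma mat_sup_norm_le:
  assumes "0 \<le> b" and "\<And>i j. i < dim_row A \<Longrightarrow> j < dim_col A \<Longrightarrow> real_of_int \<bar>A $$ (i,j)\<bar> \<le> b"
  shows "mat_sup_norm A \<le> b"
  unfolding mat_sup_norm_def using assms finite_mat_entries[of A] by (subst Max_le_iff) auto

lemma abs_le_mat_sup_norm:
  "i < dim_row A \<Longrightarrow> j < dim_col A \<Longrightarrow> real_of_int \<bar>A $$ (i,j)\<bar> \<le> mat_sup_norm A"
  unfolding mat_sup_norm_def using finite_mat_entries[of A] by (intro Max_ge) auto

lemma one_le_mat_sup_norm:
  assumes A: "A \<in> GL_int d" and d: "0 < d"
  shows "1 \<le> mat_sup_norm A"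
proof -
  obtain i where i: "i < d" "A $$ (i,0) \<noteq> 0"
    using GL_int_col_nonzero[OF A d] GL_int_carrier[OF A] by (auto simp: vec_eq_iff)
  hence "1 \<le> real_of_int \<bar>A $$ (i,0)\<bar>" by linarith
  also have "\<dots> \<le> mat_sup_norm A"
    using i d GL_int_carrier[OF A] by (intro abs_le_mat_sup_norm) auto
  finally show ?thesis .
qed

lemma real_vec_sup_norm_GL_int_ext_vec_pos:
  assumes A: "A \<in> GL_int (Suc n)"
  shows "0 < real_vec_sup_norm (real_mat A *\<^sub>v ext_vec n \<alpha>)"
proof -
  have rA: "real_mat A \<in> carrier_mat (Suc n) (Suc n)" using GL_int_carrier[OF A] by simp
  have "det (real_mat A) \<noteq> 0" using A unfolding GL_int_def by (auto simp: of_int_hom.hom_det)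
  moreover have "ext_vec n \<alpha> \<noteq> 0\<^sub>v (Suc n)"
  proof
    assume "ext_vec n \<alpha> = 0\<^sub>v (Suc n)"
    hence "ext_vec n \<alpha> $ n = 0" by simp
    thus False by (simp add: ext_vec_def)
  qed
  moreover have "ext_vec n \<alpha> \<in> carrier_vec (Suc n)" by (simp add: ext_vec_def)
  ultimately have "real_mat A *\<^sub>v ext_vec n \<alpha> \<noteq> 0\<^sub>v (Suc n)"
    using det_0_iff_vec_prod_zero[OF rA] by blast
  then obtain i where i: "i < Suc n" "(real_mat A *\<^sub>v ext_vec n \<alpha>) $ i \<noteq> 0"
    using rA by (auto simp: vec_eq_iff)
  hence "0 < \<bar>(real_mat A *\<^sub>v ext_vec n \<alpha>) $ i\<bar>" by simp
  also have "\<dots> \<le> real_vec_sup_norm (real_mat A *\<^sub>v ext_vec n \<alpha>)"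
    using i rA by (intro abs_le_real_vec_sup_norm) simp
  finally show ?thesis .
qed

section \<open>Unimodular matrices with small values at \<open>(\<alpha>, 1)\<close>\<close>

lemma transpose_bounded_basis_approx_form:
  assumes Q: "1 \<le> Q" and U: "U \<in> carrier_mat (Suc n) (Suc n)"
    and bound: "\<And>k. k < Suc n \<Longrightarrow> quad_form (approx_form n \<alpha> Q) (real_vec (col U k)) \<le> C"
  shows "real_vec_sup_norm (real_mat (transpose_mat U) *\<^sub>v ext_vec n \<alpha>) \<le> sqrt C / Q^n"
    and "mat_sup_norm (transpose_mat U) \<le> sqrt C * (1 + (\<Sum>j<n. \<bar>\<alpha> j\<bar>)) * Q"
proof -
  define q where "q k = (\<lambda>i. col U k $ i)" for k
  have q: "q k i = U $$ (i,k)" if "i < Suc n" "k < Suc n" for i k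
    using that U by (simp add: q_def)
  have small_value: "(\<Sum>i<n. (of_int (q k i) / Q)^2)
      + (Q^n * (lin_form n \<alpha> (q k) + of_int (q k n)))^2 \<le> C" if k: "k < Suc n" for k
    using bound[OF k] unfolding quad_form_approx_form[OF col_carrier_vec[OF k U]] q_def .
  have "0 \<le> (\<Sum>i<n. (of_int (q 0 i) / Q)^2)" by (intro sum_nonneg) auto
  hence C: "0 \<le> C"
    using small_value[of 0] zero_le_power2[of "Q^n * (lin_form n \<alpha> (q 0) + of_int (q 0 n))"]
    by linarith
  have entry: "(real_mat (transpose_mat U) *\<^sub>v ext_vec n \<alpha>) $ k = lin_form n \<alpha> (q k) + of_int (q k n)"
    if k: "k < Suc n" for k
  proof -
    have "(real_mat (transpose_mat U) *\<^sub>v ext_vec n \<alpha>) $ k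
        = (\<Sum>j = 0..<Suc n. real_of_int (U $$ (j,k)) * ext_vec n \<alpha> $ j)"
      using k U by (simp add: scalar_prod_def ext_vec_def)
    also have "\<dots> = (\<Sum>j<n. real_of_int (q k j) * \<alpha> j) + of_int (q k n)"
      using k q by (simp add: atLeast0LessThan ext_vec_def)
    finally show ?thesis by (simp add: lin_form_def mult.commute)
  qed
  show "real_vec_sup_norm (real_mat (transpose_mat U) *\<^sub>v ext_vec n \<alpha>) \<le> sqrt C / Q^n"
    using approx_value_bounds(1)[OF Q small_value] entry U C Q by (intro real_vec_sup_norm_le) auto
  have "real_of_int \<bar>U $$ (i,k)\<bar> \<le> sqrt C * (1 + (\<Sum>j<n. \<bar>\<alpha> j\<bar>)) * Q"
    if "i < Suc n" "k < Suc n" for i k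
  proof (cases "i < n")
    case True
    have "0 \<le> (\<Sum>j<n. \<bar>\<alpha> j\<bar>)" by (intro sum_nonneg) auto
    hence "sqrt C * 1 \<le> sqrt C * (1 + (\<Sum>j<n. \<bar>\<alpha> j\<bar>))" using C by (intro mult_left_mono) auto
    hence "sqrt C * Q \<le> sqrt C * (1 + (\<Sum>j<n. \<bar>\<alpha> j\<bar>)) * Q"
      using Q by (intro mult_right_mono) auto
    thus ?thesis using approx_value_bounds(2)[OF Q small_value[OF that(2)] True] q that by simp
  next
    case False
    hence "i = n" using that by simp
    thus ?thesis using approx_value_bounds(3)[OF Q small_value[OF that(2)]] q that by simp
  qed
  thus "mat_sup_norm (transpose_mat U) \<le> sqrt C * (1 + (\<Sum>j<n. \<bar>\<alpha> j\<bar>)) * Q"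
    using U C Q by (intro mat_sup_norm_le) (auto intro: sum_nonneg)
qed

lemma GL_int_small_values:
  assumes c: "0 < c"
    and BA: "\<forall>q. (\<exists>i<n. q i \<noteq> 0) \<longrightarrow>
               dist_int (lin_form n \<alpha> q) \<ge> c * int_vec_sup_norm n q powr (- real n)"
  shows "\<exists>B K. 0 \<le> B \<and> 0 \<le> K \<and> (\<forall>Q\<ge>1. \<exists>A\<in>GL_int (Suc n).
           real_vec_sup_norm (real_mat A *\<^sub>v ext_vec n \<alpha>) \<le> B / Q^n \<and> mat_sup_norm A \<le> K * Q)"
proof -
  obtain C where C: "\<And>G. G \<in> carrier_mat (Suc n) (Suc n) \<Longrightarrow> transpose_mat G = G \<Longrightarrow> det G \<le> 1
      \<Longrightarrow> lattice_min_ge G (Suc n) (min 1 (c^2)) \<Longrightarrow> bounded_basis G (Suc n) C"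
    using bounded_basis_exists[of "Suc n" "min 1 (c^2)" 1] c by auto
  define C' where "C' = max C 0"
  have "\<exists>A\<in>GL_int (Suc n). real_vec_sup_norm (real_mat A *\<^sub>v ext_vec n \<alpha>) \<le> sqrt C' / Q^n
          \<and> mat_sup_norm A \<le> sqrt C' * (1 + (\<Sum>j<n. \<bar>\<alpha> j\<bar>)) * Q"
    if Q: "1 \<le> Q" for Q
  proof -
    obtain U where U: "U \<in> GL_int (Suc n)"
      and bound: "\<And>k. k < Suc n \<Longrightarrow> quad_form (approx_form n \<alpha> Q) (real_vec (col U k)) \<le> C"
      using C[OF approx_form_carrier approx_form_symmetric _ lattice_min_ge_approx_form[OF Q c BA]]
        det_approx_form[of Q n \<alpha>] Q unfolding bounded_basis_def by auto
    have "quad_form (approx_form n \<alpha> Q) (real_vec (col U k)) \<le> C'" if "k < Suc n" for k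
      using bound[OF that] unfolding C'_def by simp
    thus ?thesis
      using transpose_bounded_basis_approx_form[OF Q GL_int_carrier[OF U]] GL_int_transpose[OF U]
      by blast
  qed
  thus ?thesis
    by (intro exI[of _ "sqrt C'"] exI[of _ "sqrt C' * (1 + (\<Sum>j<n. \<bar>\<alpha> j\<bar>))"])
       (auto simp: C'_def intro: sum_nonneg mult_nonneg_nonneg)
qed

lemma less_mult_powr_of_bounds:
  fixes f B K Q M :: real
  assumes B: "0 \<le> B" and Q: "0 < Q" and f: "f \<le> B / Q^n" and M: "1 \<le> M" "M \<le> K * Q"
  shows "f < (B * K^n + 1) * M powr (- real n)"
proof -
  have "0 < K * Q" using M by linarith
  hence K: "0 < K" using Q by (simp add: zero_less_mult_iff)
  have "M^n \<le> K^n * Q^n" using M by (simp add: power_mono flip: power_mult_distrib)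
  hence "B * K^n / (K^n * Q^n) \<le> B * K^n / M^n"
    using B K M Q by (intro divide_left_mono) auto
  moreover have "B / Q^n = B * K^n / (K^n * Q^n)" using K by simp
  moreover have "B * K^n / M^n < (B * K^n + 1) / M^n" using M by (simp add: divide_strict_right_mono)
  moreover have "M powr (- real n) = 1 / M^n" using M by (simp add: powr_minus powr_realpow divide_inverse)
  ultimately show ?thesis using f by simp
qed

lemma infinite_if_values_arbitrarily_small:
  fixes f :: "'a \<Rightarrow> real"
  assumes pos: "\<And>x. x \<in> T \<Longrightarrow> 0 < f x" and small: "\<And>\<epsilon>. 0 < \<epsilon> \<Longrightarrow> \<exists>x\<in>T. f x < \<epsilon>"
  shows "infinite T"
proof
  assume fin: "finite T"
  have "T \<noteq> {}" using small[of 1] by auto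
  hence "0 < Min (f ` T)" using fin pos by (subst Min_gr_iff) auto
  then obtain x where x: "x \<in> T" "f x < Min (f ` T)" using small by blast
  moreover have "Min (f ` T) \<le> f x" using fin x(1) by (intro Min_le) auto
  ultimately show False by linarith
qed

lemma GL_int_small_value_below_threshold:
  fixes \<epsilon> B K :: real
  assumes n: "1 \<le> n" and B: "0 \<le> B" and \<epsilon>: "0 < \<epsilon>"
    and family: "\<And>Q. 1 \<le> Q \<Longrightarrow> \<exists>A\<in>GL_int (Suc n).
      real_vec_sup_norm (real_mat A *\<^sub>v ext_vec n \<alpha>) \<le> B / Q^n \<and> mat_sup_norm A \<le> K * Q"
  shows "\<exists>A\<in>GL_int (Suc n). real_vec_sup_norm (real_mat A *\<^sub>v ext_vec n \<alpha>) < \<epsilon> \<and>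
           real_vec_sup_norm (real_mat A *\<^sub>v ext_vec n \<alpha>) < (B * K^n + 1) * mat_sup_norm A powr (- real n)"
proof -
  define Q where "Q = B / \<epsilon> + 1"
  have Q: "1 \<le> Q" "B / Q < \<epsilon>" using B \<epsilon> by (auto simp: Q_def field_simps)
  obtain A where A: "A \<in> GL_int (Suc n)" "real_vec_sup_norm (real_mat A *\<^sub>v ext_vec n \<alpha>) \<le> B / Q^n"
    "mat_sup_norm A \<le> K * Q"
    using family[OF Q(1)] by blast
  have "B / Q^n \<le> B / Q"
    using B Q n by (intro divide_left_mono) (auto simp: self_le_power)
  thus ?thesis
    using A Q less_mult_powr_of_bounds[OF B _ A(2) one_le_mat_sup_norm[OF A(1)] A(3)] by force
qed

theorem mainTheorem8:
  fixes n :: nat and \<alpha> :: "nat \<Rightarrow> real"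
  assumes "n \<ge> 1"
    and "lin_indep_with_one n \<alpha>"
    and "badly_approximable n \<alpha>"
  shows "\<exists>c>0. infinite {A \<in> GL_int (n+1).
           real_vec_sup_norm (map_mat real_of_int A *\<^sub>v ext_vec n \<alpha>)
             < c * mat_sup_norm A powr (- real n)}"
proof -
  obtain c0 where "0 < c0" and "\<forall>q. (\<exists>i<n. q i \<noteq> 0) \<longrightarrow>
      dist_int (lin_form n \<alpha> q) \<ge> c0 * int_vec_sup_norm n q powr (- real n)"
    using assms(3) unfolding badly_approximable_def by blast
  then obtain B K where B: "0 \<le> B" "0 \<le> K" and family: "\<And>Q. 1 \<le> Q \<Longrightarrow> \<exists>A\<in>GL_int (Suc n).
      real_vec_sup_norm (real_mat A *\<^sub>v ext_vec n \<alpha>) \<le> B / Q^n \<and> mat_sup_norm A \<le> K * Q"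
    using GL_int_small_values by blast
  let ?T = "{A \<in> GL_int (n+1). real_vec_sup_norm (real_mat A *\<^sub>v ext_vec n \<alpha>)
              < (B * K^n + 1) * mat_sup_norm A powr (- real n)}"
  have "infinite ?T"
  proof (rule infinite_if_values_arbitrarily_small)
    show "0 < real_vec_sup_norm (real_mat A *\<^sub>v ext_vec n \<alpha>)" if "A \<in> ?T" for A
      using that real_vec_sup_norm_GL_int_ext_vec_pos by simp
    show "\<exists>A\<in>?T. real_vec_sup_norm (real_mat A *\<^sub>v ext_vec n \<alpha>) < \<epsilon>" if "0 < \<epsilon>" for \<epsilon>
      using GL_int_small_value_below_threshold[OF assms(1) B(1) that family] by auto
  qed
  thus ?thesis using B by (intro exI[of _ "B * K^n + 1"]) (auto intro: add_nonneg_pos)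
qed

end
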